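(* For every integer $n \geq 1$, the number of linear arrangements of $\{1,\ldots,n\}$ that avoid the patterns $12, 23, \ldots, (n-1)n$ and contain the pattern $n1$ is exactly $D_{n-1}$ (with the convention $D_0 = 0$).
   Context: A linear arrangement of $\{1,\ldots,n\}$ is a sequence $a_1\cdots a_n$ in which each of $1,\ldots,n$ appears exactly once. It contains the pattern $ij$ if $a_t=i$ and $a_{t+1}=j$ for some $t$ (i.e. $i$ is immediately followed by $j$); otherwise it avoids it. $D_m$ is the number of linear arrangements of $\{1,\ldots,m\}$ avoiding all of the patterns $12, 23, \ldots, (m-1)m, m1$; $D_0 = 0$. *)

theory Defs
  imports Main
begin

definition arrangements :: "nat \<Rightarrow> nat list set" where
  "arrangements n = {xs. distinct xs \<and> set xs = {1..n}}"

definition contains_pat :: "nat list \<Rightarrow> nat \<Rightarrow> nat \<Rightarrow> bool" where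
  "contains_pat xs i j \<longleftrightarrow> (\<exists>t. Suc t < length xs \<and> xs ! t = i \<and> xs ! Suc t = j)"

definition D :: "nat \<Rightarrow> nat" where
  "D m = (if m = 0 then 0 else
     card {xs \<in> arrangements m.
             (\<forall>i. 1 \<le> i \<and> i < m \<longrightarrow> \<not> contains_pat xs i (i + 1)) \<and> \<not> contains_pat xs m 1})"

end

theory Submission
  imports Defs
begin

text \<open>If the arrangement contains n1, deleting n gives an arrangement of {1..n-1}; conversely
  n is reinserted right before 1. Under this correspondence the pattern (n-1)n becomes (n-1)1 and
  every other pattern i(i+1) is unaffected, so the arrangements counted on the left are exactly
  those counted by D(n-1).\<close>

lemma contains_pat_Nil [simp]: "\<not> contains_pat [] a b"
  by (simp add: contains_pat_def)

lemma contains_pat_Cons: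
  "contains_pat (x # xs) a b \<longleftrightarrow> (xs \<noteq> [] \<and> x = a \<and> hd xs = b) \<or> contains_pat xs a b"
proof
  assume "contains_pat (x # xs) a b"
  then obtain t where t: "Suc t < Suc (length xs)" "(x # xs) ! t = a" "(x # xs) ! Suc t = b"
    unfolding contains_pat_def by auto
  then show "(xs \<noteq> [] \<and> x = a \<and> hd xs = b) \<or> contains_pat xs a b"
    by (cases t) (auto simp: contains_pat_def hd_conv_nth)
next
  assume "(xs \<noteq> [] \<and> x = a \<and> hd xs = b) \<or> contains_pat xs a b"
  then show "contains_pat (x # xs) a b"
  proof
    assume "xs \<noteq> [] \<and> x = a \<and> hd xs = b"
    then show ?thesis
      unfolding contains_pat_def by (intro exI[of _ 0]) (auto simp: hd_conv_nth)
  next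
    assume "contains_pat xs a b"
    then obtain t where "Suc t < length xs" "xs ! t = a" "xs ! Suc t = b"
      unfolding contains_pat_def by auto
    then show ?thesis
      unfolding contains_pat_def by (intro exI[of _ "Suc t"]) auto
  qed
qed

lemma contains_pat_append_Cons:
  "contains_pat (us @ y # vs) a b \<longleftrightarrow>
     contains_pat us a b \<or> (us \<noteq> [] \<and> last us = a \<and> y = b) \<or> contains_pat (y # vs) a b"
  by (induction us) (auto simp: contains_pat_Cons)

lemma contains_pat_set: "contains_pat xs a b \<Longrightarrow> a \<in> set xs \<and> b \<in> set xs"
  unfolding contains_pat_def by (auto intro: nth_mem)

lemma contains_pat_split: "contains_pat xs a b \<Longrightarrow> \<exists>us vs. xs = us @ a # b # vs"
proof -
  assume "contains_pat xs a b"
  then obtain t where t: "Suc t < length xs" "xs ! t = a" "xs ! Suc t = b"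
    unfolding contains_pat_def by blast
  then have "xs = take t xs @ a # b # drop (Suc (Suc t)) xs"
    by (metis Cons_nth_drop_Suc Suc_lessD id_take_nth_drop)
  then show ?thesis by blast
qed

lemma distinct_not_contains_pat_same: "distinct xs \<Longrightarrow> \<not> contains_pat xs a a"
  unfolding contains_pat_def by (metis Suc_lessD n_not_Suc_n nth_eq_iff_index_eq)

lemma contains_pat_insert_before_other:
  assumes "b \<noteq> x" "b \<noteq> y"
  shows "contains_pat (us @ x # y # vs) a b \<longleftrightarrow> contains_pat (us @ y # vs) a b"
  using assms by (simp add: contains_pat_append_Cons contains_pat_Cons)

lemma contains_pat_insert_before_target:
  assumes "distinct (us @ y # vs)" "x \<notin> set (us @ y # vs)"
  shows "contains_pat (us @ x # y # vs) a x \<longleftrightarrow> contains_pat (us @ y # vs) a y"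
  using assms
  by (auto simp: contains_pat_append_Cons contains_pat_Cons dest: contains_pat_set)

definition insert_before :: "'a \<Rightarrow> 'a \<Rightarrow> 'a list \<Rightarrow> 'a list" where
  "insert_before x y xs = concat (map (\<lambda>z. if z = y then [x, y] else [z]) xs)"

lemma insert_before_append_Cons:
  assumes "y \<notin> set us" "y \<notin> set vs"
  shows "insert_before x y (us @ y # vs) = us @ x # y # vs"
proof -
  have "y \<notin> set ws \<Longrightarrow> concat (map (\<lambda>z. if z = y then [x, y] else [z]) ws) = ws" for ws
    by (induction ws) auto
  with assms show ?thesis by (simp add: insert_before_def)
qed

lemma arrangements_insert_Suc:
  "us @ Suc m # vs \<in> arrangements (Suc m) \<longleftrightarrow> us @ vs \<in> arrangements m"
proof
  assume big: "us @ Suc m # vs \<in> arrangements (Suc m)"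
  then have "set (us @ vs) = {1..Suc m} - {Suc m}"
    by (auto simp: arrangements_def)
  also have "\<dots> = {1..m}" by auto
  finally show "us @ vs \<in> arrangements m"
    using big by (simp add: arrangements_def)
next
  assume small: "us @ vs \<in> arrangements m"
  then have "set (us @ Suc m # vs) = insert (Suc m) {1..m}" "Suc m \<notin> set (us @ vs)"
    by (auto simp: arrangements_def)
  moreover have "insert (Suc m) {1..m} = {1..Suc m}" by auto
  ultimately show "us @ Suc m # vs \<in> arrangements (Suc m)"
    using small by (auto simp: arrangements_def)
qed

definition succ_free :: "nat \<Rightarrow> nat list \<Rightarrow> bool" where
  "succ_free n xs \<longleftrightarrow> (\<forall>i. 1 \<le> i \<and> i < n \<longrightarrow> \<not> contains_pat xs i (i + 1))"

lemma succ_free_insert_Suc: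
  assumes "us @ 1 # vs \<in> arrangements m"
  shows "succ_free (Suc m) (us @ Suc m # 1 # vs) \<longleftrightarrow>
           succ_free m (us @ 1 # vs) \<and> \<not> contains_pat (us @ 1 # vs) m 1"
proof -
  have dist: "distinct (us @ 1 # vs)" and new: "Suc m \<notin> set (us @ 1 # vs)" and "1 \<le> m"
    using assms by (auto simp: arrangements_def)
  have other: "contains_pat (us @ Suc m # 1 # vs) i (i + 1) \<longleftrightarrow> contains_pat (us @ 1 # vs) i (i + 1)"
    if "1 \<le> i" "i < m" for i
    using that by (intro contains_pat_insert_before_other) auto
  have top: "contains_pat (us @ Suc m # 1 # vs) m (Suc m) \<longleftrightarrow> contains_pat (us @ 1 # vs) m 1"
    using contains_pat_insert_before_target[OF dist new] .
  show ?thesis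
    unfolding succ_free_def using other top \<open>1 \<le> m\<close>
    by (auto simp: less_Suc_eq)
qed

lemma bij_betw_removeAll_Suc:
  assumes "1 \<le> m"
  shows "bij_betw (removeAll (Suc m))
           {xs \<in> arrangements (Suc m). succ_free (Suc m) xs \<and> contains_pat xs (Suc m) 1}
           {ys \<in> arrangements m. succ_free m ys \<and> \<not> contains_pat ys m 1}"
    (is "bij_betw _ ?A ?B")
proof -
  have decomp: "us @ Suc m # 1 # vs \<in> ?A \<longleftrightarrow> us @ 1 # vs \<in> ?B" for us vs
    using arrangements_insert_Suc[of us m "1 # vs"] succ_free_insert_Suc[of us vs m]
    by (auto simp: contains_pat_append_Cons contains_pat_Cons)
  have A_form: "\<exists>us vs. xs = us @ Suc m # 1 # vs \<and> removeAll (Suc m) xs = us @ 1 # vs \<and>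
                   insert_before (Suc m) 1 (us @ 1 # vs) = xs" if "xs \<in> ?A" for xs
  proof -
    obtain us vs where xs: "xs = us @ Suc m # 1 # vs"
      using \<open>xs \<in> ?A\<close> contains_pat_split by blast
    have "distinct xs" using \<open>xs \<in> ?A\<close> by (simp add: arrangements_def)
    then have "removeAll (Suc m) xs = us @ 1 # vs" "insert_before (Suc m) 1 (us @ 1 # vs) = xs"
      using xs by (auto simp: insert_before_append_Cons)
    with xs show ?thesis by blast
  qed
  have B_form: "\<exists>us vs. ys = us @ 1 # vs \<and> insert_before (Suc m) 1 ys = us @ Suc m # 1 # vs \<and>
                   removeAll (Suc m) (us @ Suc m # 1 # vs) = ys" if "ys \<in> ?B" for ys
  proof -
    have "distinct ys" "set ys = {1..m}" using \<open>ys \<in> ?B\<close> by (auto simp: arrangements_def)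
    obtain us vs where ys: "ys = us @ 1 # vs"
      using \<open>set ys = {1..m}\<close> assms split_list by (metis atLeastAtMost_iff order_refl)
    have "Suc m \<notin> set ys" using \<open>set ys = {1..m}\<close> by simp
    then have "1 \<notin> set us" "1 \<notin> set vs" "Suc m \<notin> set us" "Suc m \<notin> set vs"
      using \<open>distinct ys\<close> by (auto simp: ys)
    then have "insert_before (Suc m) 1 ys = us @ Suc m # 1 # vs"
        "removeAll (Suc m) (us @ Suc m # 1 # vs) = ys"
      using assms by (auto simp: ys insert_before_append_Cons)
    with ys show ?thesis by blast
  qed
  show ?thesis
  proof (rule bij_betw_byWitness[where f' = "insert_before (Suc m) 1"])
    show "\<forall>xs\<in>?A. insert_before (Suc m) 1 (removeAll (Suc m) xs) = xs"
      using A_form by fastforce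
    show "\<forall>ys\<in>?B. removeAll (Suc m) (insert_before (Suc m) 1 ys) = ys"
      using B_form by fastforce
    show "removeAll (Suc m) ` ?A \<subseteq> ?B"
      using A_form decomp by fastforce
    show "insert_before (Suc m) 1 ` ?B \<subseteq> ?A"
      using B_form decomp by fastforce
  qed
qed

theorem corollary2p2:
  fixes n :: nat
  assumes "n \<ge> 1"
  shows "card {xs \<in> arrangements n.
                (\<forall>i. 1 \<le> i \<and> i < n \<longrightarrow> \<not> contains_pat xs i (i + 1)) \<and> contains_pat xs n 1}
         = D (n - 1)"
proof (cases "n = 1")
  case True
  then have empty: "{xs \<in> arrangements n.
      (\<forall>i. 1 \<le> i \<and> i < n \<longrightarrow> \<not> contains_pat xs i (i + 1)) \<and> contains_pat xs n 1} = {}"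
    by (auto simp: arrangements_def dest: distinct_not_contains_pat_same)
  show ?thesis unfolding empty using True by (simp add: D_def)
next
  case False
  then obtain m where n: "n = Suc m" and "1 \<le> m" using assms by (cases n) auto
  then have "D (n - 1) = card {ys \<in> arrangements m. succ_free m ys \<and> \<not> contains_pat ys m 1}"
    by (simp add: D_def succ_free_def)
  also have "\<dots> = card {xs \<in> arrangements n. succ_free n xs \<and> contains_pat xs n 1}"
    using bij_betw_same_card[OF bij_betw_removeAll_Suc[OF \<open>1 \<le> m\<close>]] n by simp
  finally show ?thesis by (simp add: succ_free_def)
qed

end
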